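(* Let $n\ge1$ and $N\ge1$ be integers and let $Z_1,\dots,Z_{n+N}$ be independent identically distributed random variables with values in $[0,1]$. Let $\overline X=\frac1n\sum_{k=1}^n Z_k$ and $\overline X'=\frac1{n+N}\sum_{k=1}^{n+N}Z_k$. Define $\varphi(n)=2\left(\frac{1+n/N}{1+\sqrt{n/N}}\right)^2$. Then $\varphi(n)>1.37$, and for every constant $\delta\ge 0$, $$\Pr(\overline X'\le \overline X-\delta)\le 2\exp\!\big(-\varphi(n)\,\delta^2 n\big),\qquad \Pr(\overline X'\ge \overline X+\delta)\le 2\exp\!\big(-\varphi(n)\,\delta^2 n\big).$$
   Context: In the application, $\overline X$ is an arm's current sample mean after $n$ samples, $\overline X'$ its sample mean after $N$ additional samples, and $\delta$ is the gap between the best and another arm's current sample mean (treated as a constant): for the empirically best arm $\alpha$ and second-best arm $\beta$ this bounds $\Pr(\overline X_\alpha'\le\overline X_\beta)$ with $\delta=\overline X_\alpha-\overline X_\beta$, and for another arm $i$ it bounds $\Pr(\overline X_i'\ge \overline X_\alpha)$ with $\delta=\overline X_\alpha-\overline X_i$. *)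

theory Defs
  imports "HOL-Probability.Probability"
begin

definition phi :: "nat \<Rightarrow> nat \<Rightarrow> real" where
  "phi N n = 2 * ((1 + real n / real N) / (1 + sqrt (real n / real N)))^2"

end

theory Submission
  imports Defs
begin

text \<open>
  Write S = Z_1 + ... + Z_n and T = Z_(n+1) + ... + Z_(n+N).  The change of
  the sample mean is an exact multiple of a two-sample difference:
    (S + T)/(n + N) - S/n = N/(n + N) * (T/N - S/n).
  The difference T/N - S/n is a sum of n + N independent variables, the first n with range
  of length 1/n, the last N with range of length 1/N, and it has mean zero because all Z_k
  have the same distribution.  Hoeffding's inequality (from the library) therefore bounds each
  tail of the event "mean moves by delta" by exp(-2 (1 + n/N) delta^2 n).  Finally
  phi(n) <= 2 (1 + n/N), so this is at most exp(-phi(n) delta^2 n), which is stronger than the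
  claimed bound; and phi(n) >= 8 (sqrt 2 - 1)^2 > 1.37 by minimising over s = sqrt(n/N).
\<close>

lemma phi_eq_sqrt_ratio:
  assumes "N \<ge> 1"
  shows "phi N n = 2 * ((1 + (sqrt (real n / real N))^2) / (1 + sqrt (real n / real N)))^2"
  using assms by (simp add: phi_def)

text \<open>The ratio (1 + s^2)/(1 + s) has minimum 2 (sqrt 2 - 1) on s \<ge> 0, attained at
  s = sqrt 2 - 1; this is the AM-GM-type identity (1 + s^2) - 2a(1 + s) = (s - a)^2.\<close>
lemma ratio_lower_bound:
  fixes s :: real
  assumes "s \<ge> 0"
  shows "2 * (sqrt 2 - 1) \<le> (1 + s^2) / (1 + s)"
proof -
  define a where "a = sqrt 2 - 1"
  have "a^2 = 3 - 2 * sqrt 2"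
    unfolding a_def by (simp add: power2_eq_square algebra_simps)
  then have "(1 + s^2) - 2 * a * (1 + s) = (s - a)^2"
    by (simp add: power2_eq_square algebra_simps a_def)
  then have "2 * a * (1 + s) \<le> 1 + s^2"
    by (metis diff_ge_0_iff_ge zero_le_power2)
  with assms show ?thesis
    unfolding a_def by (simp add: field_simps)
qed

text \<open>Since 1 + s^2 \<le> (1 + s)^2, the square of the ratio is at most 1 + s^2.\<close>
lemma ratio_square_upper_bound:
  fixes s :: real
  assumes "s \<ge> 0"
  shows "((1 + s^2) / (1 + s))^2 \<le> 1 + s^2"
proof -
  have "((1 + s^2) / (1 + s))^2 = (1 + s^2) * ((1 + s^2) / (1 + s)^2)"
    by (simp add: power_divide power2_eq_square)
  also have "\<dots> \<le> (1 + s^2) * 1"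
    using assms by (intro mult_left_mono) (auto simp: divide_le_eq power2_eq_square algebra_simps add_pos_nonneg)
  finally show ?thesis by simp
qed

text \<open>phi(n) exceeds 1.37 for all n and N: 8 (sqrt 2 - 1)^2 = 24 - 16 sqrt 2 \<approx> 1.3726.\<close>
lemma phi_gt_137:
  assumes "N \<ge> 1"
  shows "phi N n > 1.37"
proof -
  have "(2 * (sqrt 2 - 1))^2 \<le> ((1 + (sqrt (real n / real N))^2) / (1 + sqrt (real n / real N)))^2"
    by (intro power_mono ratio_lower_bound) auto
  then have "phi N n \<ge> 2 * (2 * (sqrt 2 - 1))^2"
    unfolding phi_eq_sqrt_ratio[OF assms] by simp
  moreover have "sqrt 2 < 1.414375"
    by (rule real_less_lsqrt) (auto simp: power2_eq_square)
  then have "2 * (2 * (sqrt 2 - 1))^2 > (1.37::real)"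
    by (simp add: power2_eq_square algebra_simps)
  ultimately show ?thesis by linarith
qed

lemma phi_le:
  assumes "N \<ge> 1"
  shows "phi N n \<le> 2 * (1 + real n / real N)"
  using ratio_square_upper_bound[of "sqrt (real n / real N)"] assms
  unfolding phi_eq_sqrt_ratio[OF assms] by simp

definition two_sample_gap :: "nat \<Rightarrow> nat \<Rightarrow> (nat \<Rightarrow> real) \<Rightarrow> real" where
  "two_sample_gap n N z = (\<Sum>k=n+1..n+N. z k) / real N - (\<Sum>k=1..n. z k) / real n"

lemma sample_mean_change:
  fixes z :: "nat \<Rightarrow> real"
  assumes "n \<ge> 1" "N \<ge> 1"
  shows "(\<Sum>k=1..n+N. z k) / real (n+N) - (\<Sum>k=1..n. z k) / real n
       = real N / (real n + real N) * two_sample_gap n N z"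
proof -
  have "(\<Sum>k=1..n+N. z k) = (\<Sum>k=1..n. z k) + (\<Sum>k=n+1..n+N. z k)"
    using sum.atLeastLessThan_concat[of 1 "n+1" "n+N+1" z]
    by (simp add: atLeastLessThanSuc_atLeastAtMost)
  moreover have "(S + T) / (x + y) - S / x = y / (x + y) * (T / y - S / x)"
    if "x > 0" "y > 0" for x y S T :: real
    using that by (simp add: divide_simps) (simp add: algebra_simps)
  ultimately show ?thesis
    using assms by (simp add: two_sample_gap_def)
qed

lemma sample_mean_shift_iff_gap:
  fixes z :: "nat \<Rightarrow> real"
  assumes "n \<ge> 1" "N \<ge> 1"
  shows "(\<Sum>k=1..n+N. z k) / real (n+N) \<le> (\<Sum>k=1..n. z k) / real n - \<delta>
           \<longleftrightarrow> two_sample_gap n N z \<le> - (\<delta> * (real n + real N) / real N)"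
    and "(\<Sum>k=1..n+N. z k) / real (n+N) \<ge> (\<Sum>k=1..n. z k) / real n + \<delta>
           \<longleftrightarrow> two_sample_gap n N z \<ge> \<delta> * (real n + real N) / real N"
proof -
  define c where "c = real N / (real n + real N)"
  have c: "c > 0" "\<delta> = c * (\<delta> * (real n + real N) / real N)"
    using assms by (auto simp: c_def)
  note change = sample_mean_change[OF assms, of z, folded c_def]
  show "(\<Sum>k=1..n+N. z k) / real (n+N) \<le> (\<Sum>k=1..n. z k) / real n - \<delta>
      \<longleftrightarrow> two_sample_gap n N z \<le> - (\<delta> * (real n + real N) / real N)"
    using change c mult_le_cancel_left_pos[OF c(1), of "two_sample_gap n N z"
        "- (\<delta> * (real n + real N) / real N)"] by linarith
  show "(\<Sum>k=1..n+N. z k) / real (n+N) \<ge> (\<Sum>k=1..n. z k) / real n + \<delta>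
      \<longleftrightarrow> two_sample_gap n N z \<ge> \<delta> * (real n + real N) / real N"
    using change c mult_le_cancel_left_pos[OF c(1), of "\<delta> * (real n + real N) / real N"
        "two_sample_gap n N z"] by linarith
qed

lemma two_sample_exponent_le_phi:
  fixes \<delta> :: real
  assumes "n \<ge> 1" "N \<ge> 1"
  shows "exp (-2 * (\<delta> * (real n + real N) / real N)^2 / (1 / real n + 1 / real N))
       \<le> exp (- phi N n * \<delta>^2 * real n)"
proof -
  have "1 / real n + 1 / real N = (real n + real N) / (real n * real N)"
    using assms by (simp add: field_simps)
  then have "-2 * (\<delta> * (real n + real N) / real N)^2 / (1 / real n + 1 / real N)
      = - (2 * (1 + real n / real N)) * \<delta>^2 * real n"
    using assms by (simp add: power2_eq_square) (simp add: field_simps)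
  also have "\<dots> \<le> - phi N n * \<delta>^2 * real n"
    using phi_le[OF assms(2), of n] by (intro mult_right_mono) auto
  finally show ?thesis
    by (rule exp_mono)
qed

context prob_space
begin

lemma expectation_eq_if_same_distr:
  assumes "X \<in> borel_measurable M" "Y \<in> borel_measurable M"
    and "distr M borel X = distr M borel Y"
  shows "expectation X = (expectation Y :: real)"
  using integral_distr[OF assms(1), of "\<lambda>x. x"] integral_distr[OF assms(2), of "\<lambda>x. x"] assms(3)
  by simp

lemma two_sample_hoeffding:
  fixes Z :: "nat \<Rightarrow> 'a \<Rightarrow> real"
  assumes "n \<ge> 1" "N \<ge> 1"
    and indep: "indep_vars (\<lambda>_. borel) Z {1..n+N}"
    and range: "\<And>k \<omega>. k \<in> {1..n+N} \<Longrightarrow> \<omega> \<in> space M \<Longrightarrow> Z k \<omega> \<in> {0..1}"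
    and mean: "\<And>k. k \<in> {1..n+N} \<Longrightarrow> expectation (Z k) = \<mu>"
    and "\<epsilon> \<ge> 0"
  shows "prob {\<omega> \<in> space M. two_sample_gap n N (\<lambda>k. Z k \<omega>) \<le> - \<epsilon>}
           \<le> exp (-2 * \<epsilon>^2 / (1 / real n + 1 / real N))"
    and "prob {\<omega> \<in> space M. two_sample_gap n N (\<lambda>k. Z k \<omega>) \<ge> \<epsilon>}
           \<le> exp (-2 * \<epsilon>^2 / (1 / real n + 1 / real N))"
proof -
  define w where "w = (\<lambda>k. if k \<le> n then - 1 / real n else 1 / real N)"
  define Y where "Y = (\<lambda>k \<omega>. w k * Z k \<omega>)"
  define a where "a = (\<lambda>k. min 0 (w k))"
  define b where "b = (\<lambda>k. max 0 (w k))"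
  have split: "{1..n+N} = {1..n} \<union> {n+1..n+N}" "{1..n} \<inter> {n+1..n+N} = {}"
    by auto
  have sum_Y: "(\<Sum>k\<in>{1..n+N}. Y k \<omega>) = two_sample_gap n N (\<lambda>k. Z k \<omega>)" for \<omega>
    unfolding split(1) Y_def w_def two_sample_gap_def
    by (simp add: sum.union_disjoint sum_divide_distrib sum_negf)
  have mean_zero: "(\<Sum>k\<in>{1..n+N}. expectation (Y k)) = 0"
    unfolding split(1) Y_def using mean assms(1,2)
    by (simp add: sum.union_disjoint w_def)
  have width: "(\<Sum>k\<in>{1..n+N}. (b k - a k)^2) = 1 / real n + 1 / real N"
    unfolding split(1) using assms(1,2)
    by (simp add: sum.union_disjoint a_def b_def w_def power2_eq_square)
  interpret H: Hoeffding_ineq M "{1..n+N}" Y a b "\<Sum>k\<in>{1..n+N}. expectation (Y k)"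
  proof (unfold_locales)
    show "indep_vars (\<lambda>_. borel) Y {1..n+N}"
      unfolding Y_def by (rule indep_vars_compose2[OF indep]) auto
    show "AE \<omega> in M. Y k \<omega> \<in> {a k..b k}" if "k \<in> {1..n+N}" for k
      using range[OF that] by (intro AE_I2)
        (auto simp: Y_def a_def b_def w_def mult_le_0_iff mult_le_cancel_left1 mult_le_one
               min_def max_def divide_le_eq le_divide_eq)
  qed auto
  have pos: "(\<Sum>k\<in>{1..n+N}. (b k - a k)^2) > 0"
    unfolding width using assms(1,2) by (intro add_pos_pos) auto
  show "prob {\<omega> \<in> space M. two_sample_gap n N (\<lambda>k. Z k \<omega>) \<le> - \<epsilon>}
          \<le> exp (-2 * \<epsilon>^2 / (1 / real n + 1 / real N))"
    using H.Hoeffding_ineq_le[OF \<open>\<epsilon> \<ge> 0\<close> pos]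
    unfolding sum_Y width mean_zero by simp
  show "prob {\<omega> \<in> space M. two_sample_gap n N (\<lambda>k. Z k \<omega>) \<ge> \<epsilon>}
          \<le> exp (-2 * \<epsilon>^2 / (1 / real n + 1 / real N))"
    using H.Hoeffding_ineq_ge[OF \<open>\<epsilon> \<ge> 0\<close> pos]
    unfolding sum_Y width mean_zero by simp
qed

end

theorem theorem2:
  fixes M :: "'a measure" and Z :: "nat \<Rightarrow> 'a \<Rightarrow> real"
    and n N :: nat and \<delta> :: real
  assumes "prob_space M"
    and "n \<ge> 1" and "N \<ge> 1"
    and "\<And>k. k \<in> {1..n+N} \<Longrightarrow> Z k \<in> borel_measurable M"
    and "prob_space.indep_vars M (\<lambda>_. borel) Z {1..n+N}"
    and "\<And>k. k \<in> {1..n+N} \<Longrightarrow> distr M borel (Z k) = distr M borel (Z 1)"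
    and "\<And>k \<omega>. k \<in> {1..n+N} \<Longrightarrow> \<omega> \<in> space M \<Longrightarrow> Z k \<omega> \<in> {0..1}"
    and "\<delta> \<ge> 0"
  shows "phi N n > 1.37
    \<and> measure M {\<omega> \<in> space M.
          (\<Sum>k=1..n+N. Z k \<omega>) / real (n+N) \<le> (\<Sum>k=1..n. Z k \<omega>) / real n - \<delta>}
        \<le> 2 * exp (- phi N n * \<delta>^2 * real n)
    \<and> measure M {\<omega> \<in> space M.
          (\<Sum>k=1..n+N. Z k \<omega>) / real (n+N) \<ge> (\<Sum>k=1..n. Z k \<omega>) / real n + \<delta>}
        \<le> 2 * exp (- phi N n * \<delta>^2 * real n)"
proof -
  interpret prob_space M by fact
  have one: "1 \<in> {1..n+N}"
    using assms(2) by simp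
  have same_mean: "expectation (Z k) = expectation (Z 1)" if "k \<in> {1..n+N}" for k
    using assms(4)[OF that] assms(4)[OF one] assms(6)[OF that] by (rule expectation_eq_if_same_distr)
  text \<open>The deviation of the two-sample gap corresponding to a shift of the mean by \<delta>.\<close>
  define \<epsilon> where "\<epsilon> = \<delta> * (real n + real N) / real N"
  have "\<epsilon> \<ge> 0"
    using assms(8) by (simp add: \<epsilon>_def)
  note tails = two_sample_hoeffding[OF assms(2,3,5,7) same_mean this]
  have bound: "exp (-2 * \<epsilon>^2 / (1 / real n + 1 / real N)) \<le> 2 * exp (- phi N n * \<delta>^2 * real n)"
    using two_sample_exponent_le_phi[OF assms(2,3), of \<delta>] exp_ge_zero[of "- phi N n * \<delta>^2 * real n"]
    unfolding \<epsilon>_def by linarith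
  show ?thesis
    unfolding sample_mean_shift_iff_gap[OF assms(2,3)] \<epsilon>_def[symmetric]
    using phi_gt_137[OF assms(3)] tails bound by (auto intro: order_trans)
qed

end
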